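(* Let $\rho=(V,B_1,B_2,B_3,I,J)$ be a framed representation, and let $\alpha=(V,B_1,B_2,I,J)$ be its underlying ADHM representation. Then $\rho$ is cyclic if and only if $\alpha$ is cyclic (stable). Here: - $\rho$ is cyclic if there is no proper nonzero subspace $V'\subset V$ preserved by $B_1,B_2,B_3$ and containing $\mathrm{Im}\,I$; - $\alpha$ is cyclic if there is no proper nonzero subspace $V'\subset V$ preserved by $B_1,B_2$ and containing $\mathrm{Im}\,I$.
   Context: A framed representation consists of: - a finite-dimensional complex vector space $V$; - the fixed space $V_\infty=\mathbb{C}^r$ with basis $e_1,\dots,e_r$, and the fixed map $A_r\in\mathrm{End}(V_\infty)$ with $A_re_a=e_{a+1}$, $e_{r+1}=0$; - linear maps $B_1,B_2,B_3\in\mathrm{End}(V)$, $I:V_\infty\to V$, $J:V\to V_\infty$. These satisfy $$[B_1,B_2]+IJ=0,\quad JB_3-A_rJ=0,\quad B_3I-IA_r=0,\quad [B_3,B_1]=0,\quad [B_3,B_2]=0.$$ *)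

theory Defs
  imports "Jordan_Normal_Form.Matrix"
begin

text \<open>V = complex^n (n = dim V), V_infinity = complex^r; linear maps are complex matrices.
  Basis vectors are 0-indexed: A_r e_a = e_(a+1), and the last one is sent to 0.\<close>

definition shift_mat :: "nat \<Rightarrow> complex mat" where
  "shift_mat r = mat r r (\<lambda>(i, j). if i = Suc j then 1 else 0)"

definition is_framed_rep ::
  "nat \<Rightarrow> nat \<Rightarrow> complex mat \<Rightarrow> complex mat \<Rightarrow> complex mat \<Rightarrow> complex mat \<Rightarrow> complex mat \<Rightarrow> bool" where
  "is_framed_rep n r B1 B2 B3 I J \<longleftrightarrow>
     B1 \<in> carrier_mat n n \<and> B2 \<in> carrier_mat n n \<and> B3 \<in> carrier_mat n n \<and>
     I \<in> carrier_mat n r \<and> J \<in> carrier_mat r n \<and>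
     B1 * B2 - B2 * B1 + I * J = 0\<^sub>m n n \<and>
     J * B3 - shift_mat r * J = 0\<^sub>m r n \<and>
     B3 * I - I * shift_mat r = 0\<^sub>m n r \<and>
     B3 * B1 - B1 * B3 = 0\<^sub>m n n \<and>
     B3 * B2 - B2 * B3 = 0\<^sub>m n n"

definition is_subspace :: "nat \<Rightarrow> complex vec set \<Rightarrow> bool" where
  "is_subspace n W \<longleftrightarrow> W \<subseteq> carrier_vec n \<and> 0\<^sub>v n \<in> W \<and>
     (\<forall>x\<in>W. \<forall>y\<in>W. x + y \<in> W) \<and> (\<forall>c::complex. \<forall>x\<in>W. c \<cdot>\<^sub>v x \<in> W)"

definition preserves :: "complex mat \<Rightarrow> complex vec set \<Rightarrow> bool" where
  "preserves B W \<longleftrightarrow> (\<forall>x\<in>W. B *\<^sub>v x \<in> W)"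

definition image_mat :: "nat \<Rightarrow> complex mat \<Rightarrow> complex vec set" where
  "image_mat r I = {I *\<^sub>v w | w. w \<in> carrier_vec r}"

definition framed_cyclic ::
  "nat \<Rightarrow> nat \<Rightarrow> complex mat \<Rightarrow> complex mat \<Rightarrow> complex mat \<Rightarrow> complex mat \<Rightarrow> bool" where
  "framed_cyclic n r B1 B2 B3 I \<longleftrightarrow>
     \<not> (\<exists>W. is_subspace n W \<and> W \<noteq> {0\<^sub>v n} \<and> W \<noteq> carrier_vec n \<and>
           preserves B1 W \<and> preserves B2 W \<and> preserves B3 W \<and> image_mat r I \<subseteq> W)"

definition adhm_cyclic ::
  "nat \<Rightarrow> nat \<Rightarrow> complex mat \<Rightarrow> complex mat \<Rightarrow> complex mat \<Rightarrow> bool" where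
  "adhm_cyclic n r B1 B2 I \<longleftrightarrow>
     \<not> (\<exists>W. is_subspace n W \<and> W \<noteq> {0\<^sub>v n} \<and> W \<noteq> carrier_vec n \<and>
           preserves B1 W \<and> preserves B2 W \<and> image_mat r I \<subseteq> W)"

end

(* Only "framed cyclic implies ADHM cyclic" has content. Let W be a proper nonzero subspace
   invariant under B1, B2 and containing Im I. The smallest such subspace H lies inside W and is
   B3-invariant too, because B3 commutes with B1, B2 and maps Im I into itself (B3 I = I A_r).
   If H is nonzero it destabilises the framed representation. Otherwise Im I = 0, and an
   eigenspace of B3 is a proper nonzero subspace invariant under B1, B2, B3, unless B3 is
   scalar, in which case W itself is. *)

theory Submission
  imports Defs "Jordan_Normal_Form.Spectral_Radius"
begin

lemma mat_eq_if_diff_zero: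
  fixes A B :: "'a :: ab_group_add mat"
  assumes "A \<in> carrier_mat n m" "B \<in> carrier_mat n m" "A - B = 0\<^sub>m n m"
  shows "A = B"
proof (rule eq_matI)
  fix i j assume "i < dim_row B" "j < dim_col B"
  then have "A $$ (i, j) - B $$ (i, j) = 0"
    using arg_cong[OF assms(3), of "\<lambda>M. M $$ (i, j)"] assms(1,2) by simp
  then show "A $$ (i, j) = B $$ (i, j)" by simp
qed (use assms in auto)

lemma is_framed_rep_commute:
  assumes "is_framed_rep n r B1 B2 B3 I J"
  shows "B3 * B1 = B1 * B3" "B3 * B2 = B2 * B3" "B3 * I = I * shift_mat r"
proof -
  have "shift_mat r \<in> carrier_mat r r" by (simp add: shift_mat_def)
  then show "B3 * B1 = B1 * B3" "B3 * B2 = B2 * B3" "B3 * I = I * shift_mat r"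
    using assms unfolding is_framed_rep_def by (auto intro: mat_eq_if_diff_zero)
qed

lemma mult_mat_vec_commute:
  fixes A B :: "'a :: semiring_0 mat"
  assumes "A \<in> carrier_mat n n" "B \<in> carrier_mat n n" "x \<in> carrier_vec n" "A * B = B * A"
  shows "A *\<^sub>v (B *\<^sub>v x) = B *\<^sub>v (A *\<^sub>v x)"
  by (metis assms assoc_mult_mat_vec)

lemma mult_mat_zero_vec:
  fixes A :: "'a :: semiring_0 mat"
  assumes "A \<in> carrier_mat m n"
  shows "A *\<^sub>v 0\<^sub>v n = 0\<^sub>v m"
  using assms by (intro eq_vecI) (auto simp: scalar_prod_def)

lemma dim_pos_if_proper_nonzero_subspace:
  assumes "is_subspace n W" "W \<noteq> {0\<^sub>v n}" "W \<noteq> carrier_vec n"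
  shows "0 < n"
  using assms unfolding is_subspace_def
  by (metis carrier_vecD gr0I subsetI subset_antisym vec_of_dim_0)

lemma image_mat_subset_carrier: "I \<in> carrier_mat n r \<Longrightarrow> image_mat r I \<subseteq> carrier_vec n"
  unfolding image_mat_def by auto

lemma preserves_image_mat:
  assumes "A \<in> carrier_mat n n" "I \<in> carrier_mat n r" "C \<in> carrier_mat r r" "A * I = I * C"
  shows "preserves A (image_mat r I)"
  unfolding preserves_def image_mat_def
proof safe
  fix w :: "complex vec" assume w: "w \<in> carrier_vec r"
  have "A *\<^sub>v (I *\<^sub>v w) = I *\<^sub>v (C *\<^sub>v w)"
    by (metis assms w assoc_mult_mat_vec)
  then show "\<exists>v. A *\<^sub>v (I *\<^sub>v w) = I *\<^sub>v v \<and> v \<in> carrier_vec r"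
    using assms(3) w by auto
qed

lemma is_subspace_preimage:
  assumes "is_subspace n S" "A \<in> carrier_mat n n"
  shows "is_subspace n {x \<in> carrier_vec n. A *\<^sub>v x \<in> S}"
proof -
  have "A *\<^sub>v 0\<^sub>v n \<in> S"
    using assms unfolding is_subspace_def by (simp add: mult_mat_zero_vec[OF assms(2)])
  then show ?thesis
    using assms unfolding is_subspace_def by (auto simp: mult_add_distrib_mat_vec mult_mat_vec)
qed

lemma preserves_preimage_if_commute:
  assumes "preserves B S" "A \<in> carrier_mat n n" "B \<in> carrier_mat n n" "A * B = B * A"
  shows "preserves B {x \<in> carrier_vec n. A *\<^sub>v x \<in> S}"
  using assms unfolding preserves_def by (auto simp: mult_mat_vec_commute)

definition eigenspace :: "nat \<Rightarrow> complex mat \<Rightarrow> complex \<Rightarrow> complex vec set" where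
  "eigenspace n A k = {x \<in> carrier_vec n. A *\<^sub>v x = k \<cdot>\<^sub>v x}"

lemma is_subspace_eigenspace:
  assumes "A \<in> carrier_mat n n"
  shows "is_subspace n (eigenspace n A k)"
  using assms mult_mat_zero_vec[OF assms] unfolding is_subspace_def eigenspace_def
  by (auto simp: mult_add_distrib_mat_vec mult_mat_vec smult_add_distrib_vec
      smult_smult_assoc mult.commute)

lemma preserves_eigenspace_if_commute:
  assumes "A \<in> carrier_mat n n" "B \<in> carrier_mat n n" "A * B = B * A"
  shows "preserves B (eigenspace n A k)"
  unfolding preserves_def eigenspace_def
proof safe
  fix x assume x: "x \<in> carrier_vec n" "A *\<^sub>v x = k \<cdot>\<^sub>v x"
  then show "B *\<^sub>v x \<in> carrier_vec n" using assms(2) by simp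
  have "A *\<^sub>v (B *\<^sub>v x) = B *\<^sub>v (A *\<^sub>v x)"
    by (rule mult_mat_vec_commute[OF assms(1,2) x(1) assms(3)])
  also have "\<dots> = k \<cdot>\<^sub>v (B *\<^sub>v x)" using assms(2) x by (simp add: mult_mat_vec)
  finally show "A *\<^sub>v (B *\<^sub>v x) = k \<cdot>\<^sub>v (B *\<^sub>v x)" .
qed

lemma eigenspace_nonzero:
  assumes "A \<in> carrier_mat n n" "eigenvalue A k"
  shows "eigenspace n A k \<noteq> {0\<^sub>v n}"
proof -
  obtain v where "v \<in> carrier_vec n" "v \<noteq> 0\<^sub>v n" "A *\<^sub>v v = k \<cdot>\<^sub>v v"
    using assms unfolding eigenvalue_def eigenvector_def by auto
  then show ?thesis unfolding eigenspace_def by auto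
qed

lemma preserves_if_eigenspace_full:
  assumes "eigenspace n A k = carrier_vec n" "is_subspace n W"
  shows "preserves A W"
  unfolding preserves_def
proof
  fix x assume x: "x \<in> W"
  then have "x \<in> eigenspace n A k" using assms unfolding is_subspace_def by auto
  then have "A *\<^sub>v x = k \<cdot>\<^sub>v x" unfolding eigenspace_def by simp
  then show "A *\<^sub>v x \<in> W" using x assms(2) unfolding is_subspace_def by simp
qed

definition invariant_hull :: "nat \<Rightarrow> complex mat set \<Rightarrow> complex vec set \<Rightarrow> complex vec set" where
  "invariant_hull n Bs X = {x \<in> carrier_vec n.
     \<forall>S. is_subspace n S \<and> (\<forall>B\<in>Bs. preserves B S) \<and> X \<subseteq> S \<longrightarrow> x \<in> S}"

lemma invariant_hull_least:
  assumes "is_subspace n S" "\<forall>B\<in>Bs. preserves B S" "X \<subseteq> S"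
  shows "invariant_hull n Bs X \<subseteq> S"
  using assms unfolding invariant_hull_def by blast

lemma is_subspace_invariant_hull: "is_subspace n (invariant_hull n Bs X)"
  unfolding is_subspace_def invariant_hull_def by auto

lemma subset_invariant_hull: "X \<subseteq> carrier_vec n \<Longrightarrow> X \<subseteq> invariant_hull n Bs X"
  unfolding invariant_hull_def by blast

lemma preserves_invariant_hull:
  assumes "B \<in> Bs" "B \<in> carrier_mat n n"
  shows "preserves B (invariant_hull n Bs X)"
  using assms unfolding preserves_def invariant_hull_def by auto

lemma preserves_invariant_hull_if_commute:
  assumes A: "A \<in> carrier_mat n n" and Bs: "Bs \<subseteq> carrier_mat n n"
    and commute: "\<forall>B\<in>Bs. A * B = B * A"
    and X: "X \<subseteq> carrier_vec n" "\<forall>x\<in>X. A *\<^sub>v x \<in> invariant_hull n Bs X"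
  shows "preserves A (invariant_hull n Bs X)"
proof -
  define U where "U = {x \<in> carrier_vec n. A *\<^sub>v x \<in> invariant_hull n Bs X}"
  have "is_subspace n U"
    unfolding U_def by (rule is_subspace_preimage[OF is_subspace_invariant_hull A])
  moreover have "\<forall>B\<in>Bs. preserves B U"
    unfolding U_def using A Bs commute
    by (auto intro: preserves_preimage_if_commute preserves_invariant_hull)
  moreover have "X \<subseteq> U" using X unfolding U_def by auto
  ultimately have "invariant_hull n Bs X \<subseteq> U" by (rule invariant_hull_least)
  then show ?thesis unfolding U_def preserves_def by auto
qed

lemma exists_invariant_subspace_if_commute:
  assumes W: "is_subspace n W" "W \<noteq> {0\<^sub>v n}" "W \<noteq> carrier_vec n" "\<forall>B\<in>Bs. preserves B W"
    and A: "A \<in> carrier_mat n n" and Bs: "Bs \<subseteq> carrier_mat n n"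
    and commute: "\<forall>B\<in>Bs. A * B = B * A"
  obtains W' where "is_subspace n W'" "W' \<noteq> {0\<^sub>v n}" "W' \<noteq> carrier_vec n"
    "\<forall>B\<in>Bs. preserves B W'" "preserves A W'"
proof -
  obtain k where k: "eigenvalue A k"
    using spectrum_non_empty[OF A dim_pos_if_proper_nonzero_subspace[OF W(1-3)]]
    unfolding spectrum_def by auto
  show ?thesis
  proof (cases "eigenspace n A k = carrier_vec n")
    case True
    show ?thesis by (rule that[OF W]) (rule preserves_if_eigenspace_full[OF True W(1)])
  next
    case False
    show ?thesis
    proof (rule that)
      show "is_subspace n (eigenspace n A k)" by (rule is_subspace_eigenspace[OF A])
      show "eigenspace n A k \<noteq> {0\<^sub>v n}" by (rule eigenspace_nonzero[OF A k])
      show "eigenspace n A k \<noteq> carrier_vec n" by (rule False)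
      show "\<forall>B\<in>Bs. preserves B (eigenspace n A k)"
        using Bs commute by (auto intro: preserves_eigenspace_if_commute[OF A])
      show "preserves A (eigenspace n A k)" by (rule preserves_eigenspace_if_commute[OF A A refl])
    qed
  qed
qed

lemma is_framed_rep_invariant_hull:
  assumes rep: "is_framed_rep n r B1 B2 B3 I J"
  defines "H \<equiv> invariant_hull n {B1, B2} (image_mat r I)"
  shows "is_subspace n H" "preserves B1 H" "preserves B2 H" "preserves B3 H"
    "image_mat r I \<subseteq> H"
proof -
  have carrier: "{B1, B2} \<subseteq> carrier_mat n n" "B3 \<in> carrier_mat n n" "I \<in> carrier_mat n r"
    using rep unfolding is_framed_rep_def by auto
  note commute = is_framed_rep_commute[OF rep]
  have image: "image_mat r I \<subseteq> carrier_vec n" by (rule image_mat_subset_carrier[OF carrier(3)])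
  show "is_subspace n H" unfolding H_def by (rule is_subspace_invariant_hull)
  show "preserves B1 H" "preserves B2 H"
    unfolding H_def using carrier by (auto intro: preserves_invariant_hull)
  have image_H: "image_mat r I \<subseteq> H" unfolding H_def by (rule subset_invariant_hull[OF image])
  then show "image_mat r I \<subseteq> H" .
  have "preserves B3 (image_mat r I)"
    using preserves_image_mat[OF carrier(2,3) _ commute(3)] by (simp add: shift_mat_def)
  with image_H have "\<forall>x\<in>image_mat r I. B3 *\<^sub>v x \<in> H" unfolding preserves_def by auto
  then show "preserves B3 H"
    unfolding H_def using carrier commute image by (intro preserves_invariant_hull_if_commute) auto
qed

lemma adhm_cyclic_if_framed_cyclic:
  assumes rep: "is_framed_rep n r B1 B2 B3 I J" and framed: "framed_cyclic n r B1 B2 B3 I"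
  shows "adhm_cyclic n r B1 B2 I"
  unfolding adhm_cyclic_def
proof (intro notI, elim exE conjE)
  fix W assume W: "is_subspace n W" "W \<noteq> {0\<^sub>v n}" "W \<noteq> carrier_vec n"
    "preserves B1 W" "preserves B2 W" "image_mat r I \<subseteq> W"
  define H where "H = invariant_hull n {B1, B2} (image_mat r I)"
  note H = is_framed_rep_invariant_hull[OF rep, folded H_def]
  show False
  proof (cases "H = {0\<^sub>v n}")
    case True
    have carrier: "B3 \<in> carrier_mat n n" "{B1, B2} \<subseteq> carrier_mat n n"
      using rep unfolding is_framed_rep_def by auto
    have commute: "\<forall>B\<in>{B1, B2}. B3 * B = B * B3"
      using is_framed_rep_commute[OF rep] by simp
    obtain W' where W': "is_subspace n W'" "W' \<noteq> {0\<^sub>v n}" "W' \<noteq> carrier_vec n"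
      "\<forall>B\<in>{B1, B2}. preserves B W'" "preserves B3 W'"
      using exists_invariant_subspace_if_commute[OF W(1-3) _ carrier commute] W(4,5) by blast
    moreover have "image_mat r I \<subseteq> W'"
      using H(5) True W'(1) unfolding is_subspace_def by blast
    ultimately show False using framed unfolding framed_cyclic_def by blast
  next
    case False
    have "H \<subseteq> W" unfolding H_def using W(1,4-6) by (intro invariant_hull_least) auto
    then have "H \<noteq> carrier_vec n" using W(1,3) unfolding is_subspace_def by blast
    with False H show False using framed unfolding framed_cyclic_def by blast
  qed
qed

theorem lemma3p2:
  fixes n r :: nat and B1 B2 B3 I J :: "complex mat"
  assumes "is_framed_rep n r B1 B2 B3 I J"
  shows "framed_cyclic n r B1 B2 B3 I \<longleftrightarrow> adhm_cyclic n r B1 B2 I"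
proof
  show "framed_cyclic n r B1 B2 B3 I \<Longrightarrow> adhm_cyclic n r B1 B2 I"
    by (rule adhm_cyclic_if_framed_cyclic[OF assms])
  show "adhm_cyclic n r B1 B2 I \<Longrightarrow> framed_cyclic n r B1 B2 B3 I"
    unfolding adhm_cyclic_def framed_cyclic_def by blast
qed

end
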